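(* Let $\mathcal{M}$ be an ergodic (not necessarily reversible) Markov chain on a finite state space, with continuization $\widetilde{\mathcal{M}}$. Then $$\lambda_1(\mathcal{M})\ \ge\ \frac{(\frac12-\frac{1}{2e})^2}{8\,\tau(\mathcal{M},\frac{1}{2e})^2}\qquad\text{and}\qquad \lambda_1(\mathcal{M})\ \ge\ \frac{(\frac12-\frac{1}{2e})^2}{8\,\tau(\widetilde{\mathcal{M}},\frac{1}{2e})^2}.$$
   Context: A (discrete-time) Markov chain on a finite state space $\Omega$ with transition matrix $P$ is ergodic if irreducible and aperiodic; it then has a unique stationary distribution $\pi>0$. Variation distance: $\|\theta_1-\theta_2\|=\frac12\sum_i|\theta_1(i)-\theta_2(i)|$. Discrete mixing time: $\tau_x(\mathcal{M},\varepsilon)=\min\{t>0 \text{ integer}: \|P^{t'}(x,\cdot)-\pi\|\le\varepsilon \ \forall t'\ge t\}$, $\tau(\mathcal{M},\varepsilon)=\max_x\tau_x(\mathcal{M},\varepsilon)$. Continuization: with $Q=P-I$, $\widetilde{\mathcal{M}}$ has time-$t$ transition matrix $\exp(Qt)$; $\tau_x(\widetilde{\mathcal{M}},\varepsilon)=\inf\{t>0: \|v_x\exp(Qt')-\pi\|\le\varepsilon \ \forall \text{ real } t'\ge t\}$ ($v_x$ the unit row vector at $x$), $\tau(\widetilde{\mathcal{M}},\varepsilon)=\max_x\tau_x(\widetilde{\mathcal{M}},\varepsilon)$. Dirichlet form $\mathcal{E}_{\mathcal{M}}(\varphi,\varphi)=\frac12\sum_{x,y}\pi(x)P(x,y)(\varphi(x)-\varphi(y))^2$;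 $\lambda_1(\mathcal{M})=\inf_\varphi\mathcal{E}_{\mathcal{M}}(\varphi,\varphi)/\operatorname{var}_\pi\varphi$ over non-constant $\varphi:\Omega\to\mathbb{R}$. *)

theory Defs
  imports "HOL-Analysis.Analysis" "HOL-Library.Extended_Real"
begin

definition stochastic :: "('a::finite \<Rightarrow> 'a \<Rightarrow> real) \<Rightarrow> bool" where
  "stochastic P \<longleftrightarrow> (\<forall>x y. 0 \<le> P x y) \<and> (\<forall>x. (\<Sum>y\<in>UNIV. P x y) = 1)"

definition mat_mult :: "('a::finite \<Rightarrow> 'a \<Rightarrow> real) \<Rightarrow> ('a \<Rightarrow> 'a \<Rightarrow> real) \<Rightarrow> ('a \<Rightarrow> 'a \<Rightarrow> real)" where
  "mat_mult A B = (\<lambda>x z. \<Sum>y\<in>UNIV. A x y * B y z)"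

definition mat_id :: "'a \<Rightarrow> 'a \<Rightarrow> real" where
  "mat_id = (\<lambda>x y. if x = y then 1 else 0)"

fun mat_pow :: "('a::finite \<Rightarrow> 'a \<Rightarrow> real) \<Rightarrow> nat \<Rightarrow> ('a \<Rightarrow> 'a \<Rightarrow> real)" where
  "mat_pow A 0 = mat_id"
| "mat_pow A (Suc n) = mat_mult (mat_pow A n) A"

definition irreducible_chain :: "('a::finite \<Rightarrow> 'a \<Rightarrow> real) \<Rightarrow> bool" where
  "irreducible_chain P \<longleftrightarrow> (\<forall>x y. \<exists>n. mat_pow P n x y > 0)"

definition period :: "('a::finite \<Rightarrow> 'a \<Rightarrow> real) \<Rightarrow> 'a \<Rightarrow> nat" where
  "period P x = Gcd {n. n > 0 \<and> mat_pow P n x x > 0}"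

definition aperiodic_chain :: "('a::finite \<Rightarrow> 'a \<Rightarrow> real) \<Rightarrow> bool" where
  "aperiodic_chain P \<longleftrightarrow> (\<forall>x. period P x = 1)"

definition ergodic :: "('a::finite \<Rightarrow> 'a \<Rightarrow> real) \<Rightarrow> bool" where
  "ergodic P \<longleftrightarrow> stochastic P \<and> irreducible_chain P \<and> aperiodic_chain P"

definition stationary :: "('a::finite \<Rightarrow> 'a \<Rightarrow> real) \<Rightarrow> ('a \<Rightarrow> real) \<Rightarrow> bool" where
  "stationary P \<pi> \<longleftrightarrow> (\<forall>x. 0 \<le> \<pi> x) \<and> (\<Sum>x\<in>UNIV. \<pi> x) = 1 \<and>
     (\<forall>y. (\<Sum>x\<in>UNIV. \<pi> x * P x y) = \<pi> y)"

definition var_dist :: "('a::finite \<Rightarrow> real) \<Rightarrow> ('a \<Rightarrow> real) \<Rightarrow> real" where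
  "var_dist \<theta>1 \<theta>2 = (1/2) * (\<Sum>i\<in>UNIV. \<bar>\<theta>1 i - \<theta>2 i\<bar>)"

definition mix_time_from :: "('a::finite \<Rightarrow> 'a \<Rightarrow> real) \<Rightarrow> ('a \<Rightarrow> real) \<Rightarrow> real \<Rightarrow> 'a \<Rightarrow> nat" where
  "mix_time_from P \<pi> \<epsilon> x =
     (LEAST t. t > 0 \<and> (\<forall>t'\<ge>t. var_dist (mat_pow P t' x) \<pi> \<le> \<epsilon>))"

definition mix_time :: "('a::finite \<Rightarrow> 'a \<Rightarrow> real) \<Rightarrow> ('a \<Rightarrow> real) \<Rightarrow> real \<Rightarrow> nat" where
  "mix_time P \<pi> \<epsilon> = Max (range (mix_time_from P \<pi> \<epsilon>))"

text \<open>Continuization: Q = P - I, time-t kernel exp(Q t) = sum_k (t^k/k!) Q^k.\<close>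
definition gen_matrix :: "('a::finite \<Rightarrow> 'a \<Rightarrow> real) \<Rightarrow> ('a \<Rightarrow> 'a \<Rightarrow> real)" where
  "gen_matrix P = (\<lambda>x y. P x y - mat_id x y)"

definition exp_gen :: "('a::finite \<Rightarrow> 'a \<Rightarrow> real) \<Rightarrow> real \<Rightarrow> ('a \<Rightarrow> 'a \<Rightarrow> real)" where
  "exp_gen P t = (\<lambda>x y. \<Sum>k. (t ^ k / fact k) * mat_pow (gen_matrix P) k x y)"

definition cmix_time_from :: "('a::finite \<Rightarrow> 'a \<Rightarrow> real) \<Rightarrow> ('a \<Rightarrow> real) \<Rightarrow> real \<Rightarrow> 'a \<Rightarrow> real" where
  "cmix_time_from P \<pi> \<epsilon> x =
     Inf {t. t > 0 \<and> (\<forall>t'::real. t' \<ge> t \<longrightarrow> var_dist (exp_gen P t' x) \<pi> \<le> \<epsilon>)}"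

definition cmix_time :: "('a::finite \<Rightarrow> 'a \<Rightarrow> real) \<Rightarrow> ('a \<Rightarrow> real) \<Rightarrow> real \<Rightarrow> real" where
  "cmix_time P \<pi> \<epsilon> = Max (range (cmix_time_from P \<pi> \<epsilon>))"

definition dirichlet :: "('a::finite \<Rightarrow> 'a \<Rightarrow> real) \<Rightarrow> ('a \<Rightarrow> real) \<Rightarrow> ('a \<Rightarrow> real) \<Rightarrow> real" where
  "dirichlet P \<pi> \<phi> = (1/2) * (\<Sum>x\<in>UNIV. \<Sum>y\<in>UNIV. \<pi> x * P x y * (\<phi> x - \<phi> y)^2)"

definition var_pi :: "('a::finite \<Rightarrow> real) \<Rightarrow> ('a \<Rightarrow> real) \<Rightarrow> real" where
  "var_pi \<pi> \<phi> = (\<Sum>x\<in>UNIV. \<pi> x * (\<phi> x - (\<Sum>y\<in>UNIV. \<pi> y * \<phi> y))^2)"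

text \<open>Spectral gap, as an extended real (infimum over the empty set is +infinity,
  which happens only for a one-point state space).\<close>
definition lambda1 :: "('a::finite \<Rightarrow> 'a \<Rightarrow> real) \<Rightarrow> ('a \<Rightarrow> real) \<Rightarrow> ereal" where
  "lambda1 P \<pi> = (INF \<phi> \<in> {\<phi>::'a \<Rightarrow> real. \<exists>x y. \<phi> x \<noteq> \<phi> y}.
                     ereal (dirichlet P \<pi> \<phi> / var_pi \<pi> \<phi>))"

end

(* Put eps = 1/(2e) and a = 1/2 - eps, and let K be a stochastic kernel each of whose rows is
   within eps of pi in total variation.  If g >= 0 vanishes on a set of pi-mass at least 1/2,
   every row of K puts mass at least a on that set, hence
     E_K(g) = sum_{x,y} pi(x) K(x,y) (g(y) - g(x))^2 >= a * sum_x pi(x) g(x)^2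
   (E_K(g) is energy K pi g below).  Applied to the positive and negative parts of phi - m,
   m a median of phi, this gives the Poincare inequality a * var_pi(phi) <= E_K(phi).
   Splitting n-step paths at their intermediate states gives E_{P^n} <= n^2 E_P, and averaging
   over a Poisson(t) number N of steps gives E_{exp(tQ)} <= E[N^2] E_P = (t^2 + t) E_P.
   With K = P^tau for the discrete mixing time tau, and K = exp(2 sigma Q) for the continuous
   mixing time sigma >= 1/4, this yields lambda1 >= a / (2 C) for C = tau^2 resp.
   4 sigma^2 + 2 sigma, which dominates the stated bounds since a <= 1/3.  Both mixing times
   are finite by the convergence theorem, proved by Doeblin's contraction for a strictly
   positive power of P. *)

theory Submission
  imports Defs
begin

section \<open>Matrix powers of stochastic matrices\<close>

lemma mat_mult_assoc: "mat_mult (mat_mult A B) C = mat_mult A (mat_mult B C)"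
  unfolding mat_mult_def
  by (auto simp: sum_distrib_left sum_distrib_right mult.assoc intro!: ext sum.swap[THEN trans])

lemma mat_mult_id_left [simp]: "mat_mult mat_id A = A"
  unfolding mat_mult_def mat_id_def by (auto intro!: ext simp: if_distrib[where f="\<lambda>c. c * _"] cong: if_cong)

lemma mat_mult_id_right [simp]: "mat_mult A mat_id = A"
  unfolding mat_mult_def mat_id_def by (auto intro!: ext simp: if_distrib cong: if_cong)

lemma mat_pow_add: "mat_pow A (m + n) = mat_mult (mat_pow A m) (mat_pow A n)"
  by (induction n) (auto simp: mat_mult_assoc)

lemma stochastic_nonneg: "stochastic P \<Longrightarrow> 0 \<le> P x y"
  unfolding stochastic_def by auto

lemma stochastic_row_sum: "stochastic P \<Longrightarrow> (\<Sum>y\<in>UNIV. P x y) = 1"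
  unfolding stochastic_def by auto

lemma stochastic_le_1:
  assumes "stochastic P"
  shows "P x y \<le> 1"
proof -
  have "P x y \<le> (\<Sum>y\<in>UNIV. P x y)"
    using stochastic_nonneg[OF assms] by (intro member_le_sum) auto
  thus ?thesis using stochastic_row_sum[OF assms] by simp
qed

lemma stochastic_mat_mult:
  assumes "stochastic A" and "stochastic B"
  shows "stochastic (mat_mult A B)"
proof -
  have "(\<Sum>z\<in>UNIV. mat_mult A B x z) = (\<Sum>y\<in>UNIV. A x y * (\<Sum>z\<in>UNIV. B y z))" for x
    unfolding mat_mult_def by (simp add: sum_distrib_left) (rule sum.swap)
  thus ?thesis using assms
    by (auto simp: stochastic_def mat_mult_def intro!: sum_nonneg)
qed

lemma stochastic_mat_id: "stochastic mat_id"
  unfolding stochastic_def mat_id_def by auto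

lemma stochastic_mat_pow: "stochastic P \<Longrightarrow> stochastic (mat_pow P n)"
  by (induction n) (auto intro: stochastic_mat_id stochastic_mat_mult)

lemma stationary_mat_pow:
  assumes "stationary P \<pi>"
  shows "(\<Sum>x\<in>UNIV. \<pi> x * mat_pow P n x y) = \<pi> y"
proof (induction n arbitrary: y)
  case 0
  show ?case by (simp add: mat_id_def if_distrib cong: if_cong)
next
  case (Suc n)
  have "(\<Sum>x\<in>UNIV. \<pi> x * mat_pow P (Suc n) x y)
      = (\<Sum>z\<in>UNIV. (\<Sum>x\<in>UNIV. \<pi> x * mat_pow P n x z) * P z y)"
    by (simp add: mat_mult_def sum_distrib_left sum_distrib_right mult.assoc) (rule sum.swap)
  also have "\<dots> = \<pi> y"
    using Suc assms unfolding stationary_def by simp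
  finally show ?case .
qed

lemma mat_pow_add_pos:
  assumes "stochastic P" and "0 < mat_pow P m x z" and "0 < mat_pow P n z y"
  shows "0 < mat_pow P (m + n) x y"
proof -
  have "mat_pow P m x z * mat_pow P n z y \<le> mat_pow P (m + n) x y"
    unfolding mat_pow_add mat_mult_def
    using stochastic_nonneg[OF stochastic_mat_pow[OF assms(1)]]
    by (intro member_le_sum) (auto intro: mult_nonneg_nonneg)
  thus ?thesis using assms(2,3) by (meson mult_pos_pos order.strict_trans2)
qed

section \<open>Primitivity of ergodic chains\<close>

lemma add_closed_mult_mem:
  fixes S :: "nat set"
  assumes add: "\<And>a b. a \<in> S \<Longrightarrow> b \<in> S \<Longrightarrow> a + b \<in> S" and "a \<in> S" and "0 < k"
  shows "k * a \<in> S"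
  using \<open>0 < k\<close>
proof (induction k)
  case (Suc k)
  thus ?case using add[OF \<open>a \<in> S\<close>, of "k * a"] \<open>a \<in> S\<close> by (cases "k = 0") auto
qed simp

lemma add_closed_Gcd_eq_1_obtains_consecutive:
  fixes S :: "nat set"
  assumes add: "\<And>a b. a \<in> S \<Longrightarrow> b \<in> S \<Longrightarrow> a + b \<in> S" and gcd: "Gcd S = 1"
  obtains c where "0 < c" "c \<in> S" "c + 1 \<in> S"
proof -
  define S0 where "S0 = insert 0 S"
  have add0: "a + b \<in> S0" if "a \<in> S0" "b \<in> S0" for a b
    using that add unfolding S0_def by auto
  have mult0: "k * a \<in> S0" if "a \<in> S0" for k a
    using that add_closed_mult_mem[OF add, of a k] by (cases "k = 0") (auto simp: S0_def)
  \<comment> \<open>The least positive difference d of two elements of S0 divides every element of S, so d = 1.\<close>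
  define D where "D = {d. 0 < d \<and> (\<exists>b\<in>S0. b + d \<in> S0)}"
  have "\<not> S \<subseteq> {0}" using gcd Gcd_0_iff[of S] by simp
  then obtain s where "s \<in> S" "s \<noteq> 0" by blast
  hence "s \<in> D" unfolding D_def S0_def by auto
  define d where "d = (LEAST d. d \<in> D)"
  have "d \<in> D" unfolding d_def using \<open>s \<in> D\<close> by (rule LeastI)
  then obtain b where b: "b \<in> S0" "b + d \<in> S0" and "0 < d" unfolding D_def by auto
  have "d dvd t" if "t \<in> S" for t
  proof (rule ccontr)
    assume "\<not> d dvd t"
    hence "0 < t mod d" by (simp add: dvd_eq_mod_eq_0)
    have "(t div d) * (b + d) + t mod d = t + (t div d) * b"
      by (simp add: algebra_simps)
    moreover have "t + (t div d) * b \<in> S0"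
      using add0[OF _ mult0[OF b(1)]] that by (simp add: S0_def)
    ultimately have "t mod d \<in> D"
      using \<open>0 < t mod d\<close> mult0[OF b(2), of "t div d"] unfolding D_def
      by (auto intro!: bexI[of _ "t div d * (b + d)"])
    hence "d \<le> t mod d" unfolding d_def by (rule Least_le)
    with \<open>0 < d\<close> show False using mod_less_divisor[of d t] by linarith
  qed
  hence "d = 1" using gcd Gcd_greatest[of S d] by simp
  show ?thesis
  proof (cases "b = 0")
    case True
    hence "1 \<in> S" using b \<open>d = 1\<close> by (simp add: S0_def)
    thus ?thesis using that[of 1] add[of 1 1] by simp
  next
    case False
    thus ?thesis using that[of b] b \<open>d = 1\<close> by (simp add: S0_def)
  qed
qed

lemma add_closed_consecutive_contains_all_large:
  fixes S :: "nat set"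
  assumes add: "\<And>a b. a \<in> S \<Longrightarrow> b \<in> S \<Longrightarrow> a + b \<in> S"
    and c: "0 < c" "c \<in> S" "c + 1 \<in> S" and "c * c \<le> n"
  shows "n \<in> S"
proof -
  define q r where "q = n div c" and "r = n mod c"
  have "r < c" using c(1) by (simp add: r_def)
  have "c \<le> q" using div_le_mono[OF \<open>c * c \<le> n\<close>, of c] c(1) by (simp add: q_def)
  have "n = (q - r) * c + r * (c + 1)"
    using \<open>r < c\<close> \<open>c \<le> q\<close> by (simp add: q_def r_def algebra_simps diff_mult_distrib)
  moreover have "(q - r) * c \<in> S"
    using add_closed_mult_mem[OF add c(2)] \<open>r < c\<close> \<open>c \<le> q\<close> by simp
  moreover have "r * (c + 1) \<in> S" if "0 < r"
    using add_closed_mult_mem[OF add c(3) that] .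
  ultimately show ?thesis using add by (cases "r = 0") auto
qed

lemma aperiodic_eventually_return:
  assumes "stochastic P" and "aperiodic_chain P"
  shows "\<exists>M. \<forall>n\<ge>M. 0 < mat_pow P n x x"
proof -
  let ?S = "{n. 0 < n \<and> 0 < mat_pow P n x x}"
  have add: "a + b \<in> ?S" if "a \<in> ?S" "b \<in> ?S" for a b
    using that mat_pow_add_pos[OF assms(1), of a x x b x] by simp
  moreover have "Gcd ?S = 1"
    using assms(2) unfolding aperiodic_chain_def period_def by simp
  ultimately obtain c where "0 < c" "c \<in> ?S" "c + 1 \<in> ?S"
    by (rule add_closed_Gcd_eq_1_obtains_consecutive)
  thus ?thesis
    using add_closed_consecutive_contains_all_large[of ?S c, OF add] by blast
qed

lemma ergodic_eventually_positive:
  assumes "ergodic P"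
  shows "eventually (\<lambda>n. \<forall>x y. 0 < mat_pow P n x y) sequentially"
proof (intro eventually_all_finite)
  fix x y
  have st: "stochastic P" using assms by (simp add: ergodic_def)
  obtain k where k: "0 < mat_pow P k x y"
    using assms by (auto simp: ergodic_def irreducible_chain_def)
  obtain M where M: "\<And>n. M \<le> n \<Longrightarrow> 0 < mat_pow P n x x"
    using aperiodic_eventually_return[OF st] assms by (auto simp: ergodic_def)
  have "0 < mat_pow P n x y" if "M + k \<le> n" for n
    using mat_pow_add_pos[OF st M[of "n - k"] k] that by simp
  thus "eventually (\<lambda>n. 0 < mat_pow P n x y) sequentially"
    unfolding eventually_sequentially by blast
qed

lemma stationary_pos:
  assumes "stochastic P" and "irreducible_chain P" and "stationary P \<pi>"
  shows "0 < \<pi> y"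
proof -
  have \<pi>0: "0 \<le> \<pi> x" for x using assms(3) by (simp add: stationary_def)
  have "\<not> (\<forall>x. \<pi> x = 0)"
  proof
    assume "\<forall>x. \<pi> x = 0"
    thus False using assms(3) by (simp add: stationary_def)
  qed
  then obtain x where "\<pi> x \<noteq> 0" by blast
  hence x: "0 < \<pi> x" using \<pi>0[of x] by simp
  obtain n where n: "0 < mat_pow P n x y"
    using assms(2) unfolding irreducible_chain_def by blast
  have "\<pi> x * mat_pow P n x y \<le> (\<Sum>x\<in>UNIV. \<pi> x * mat_pow P n x y)"
    using \<pi>0 stochastic_nonneg[OF stochastic_mat_pow[OF assms(1)]] by (intro member_le_sum) auto
  also have "\<dots> = \<pi> y" by (rule stationary_mat_pow[OF assms(3)])
  finally show ?thesis using x n by (meson mult_pos_pos order.strict_trans2)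
qed

section \<open>Convergence in total variation\<close>

lemma var_dist_nonneg: "0 \<le> var_dist \<mu> \<nu>"
  by (simp add: var_dist_def sum_nonneg)

lemma var_dist_commute: "var_dist \<mu> \<nu> = var_dist \<nu> \<mu>"
  by (simp add: var_dist_def abs_minus_commute)

lemma var_dist_le_1:
  assumes "\<And>x. 0 \<le> \<mu> x" "(\<Sum>x\<in>UNIV. \<mu> x) = 1" "\<And>x. 0 \<le> \<nu> x" "(\<Sum>x\<in>UNIV. \<nu> x) = 1"
  shows "var_dist \<mu> \<nu> \<le> 1"
proof -
  have "(\<Sum>x\<in>UNIV. \<bar>\<mu> x - \<nu> x\<bar>) \<le> (\<Sum>x\<in>UNIV. \<mu> x + \<nu> x)"
    using assms by (intro sum_mono) (simp add: abs_le_iff)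
  thus ?thesis using assms by (simp add: var_dist_def sum.distrib)
qed

lemma sum_diff_le_var_dist:
  fixes \<mu> \<nu> :: "'a::finite \<Rightarrow> real"
  assumes "(\<Sum>y\<in>UNIV. \<mu> y) = (\<Sum>y\<in>UNIV. \<nu> y)"
  shows "(\<Sum>y\<in>A. \<mu> y) - (\<Sum>y\<in>A. \<nu> y) \<le> var_dist \<mu> \<nu>"
proof -
  have split: "(\<Sum>y\<in>UNIV. f y) = (\<Sum>y\<in>A. f y) + (\<Sum>y\<in>-A. f y)" for f :: "'a \<Rightarrow> real"
    using sum.union_disjoint[of A "-A" f] by (simp add: Compl_partition)
  have "(\<Sum>y\<in>A. \<mu> y - \<nu> y) = (\<Sum>y\<in>-A. \<nu> y - \<mu> y)"
    using split[of "\<lambda>y. \<mu> y - \<nu> y"] assms by (simp add: sum_subtractf)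
  moreover have "(\<Sum>y\<in>A. \<mu> y - \<nu> y) \<le> (\<Sum>y\<in>A. \<bar>\<mu> y - \<nu> y\<bar>)"
    and "(\<Sum>y\<in>-A. \<nu> y - \<mu> y) \<le> (\<Sum>y\<in>-A. \<bar>\<mu> y - \<nu> y\<bar>)"
    by (intro sum_mono; simp)+
  ultimately have "2 * (\<Sum>y\<in>A. \<mu> y - \<nu> y) \<le> (\<Sum>y\<in>UNIV. \<bar>\<mu> y - \<nu> y\<bar>)"
    using split[of "\<lambda>y. \<bar>\<mu> y - \<nu> y\<bar>"] by linarith
  thus ?thesis by (simp add: var_dist_def sum_subtractf)
qed

lemma var_dist_mult_stochastic_le:
  fixes \<mu> \<nu> :: "'a::finite \<Rightarrow> real"
  assumes K: "stochastic K" and mass: "(\<Sum>x\<in>UNIV. \<mu> x) = (\<Sum>x\<in>UNIV. \<nu> x)"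
  shows "var_dist (\<lambda>y. \<Sum>x\<in>UNIV. \<mu> x * K x y) (\<lambda>y. \<Sum>x\<in>UNIV. \<nu> x * K x y)
       \<le> (1 - (\<Sum>y\<in>UNIV. Min (range (\<lambda>x. K x y)))) * var_dist \<mu> \<nu>"
proof -
  define m where "m y = Min (range (\<lambda>x. K x y))" for y
  define d where "d x = \<mu> x - \<nu> x" for x
  have "(\<Sum>x\<in>UNIV. d x) = 0" using mass by (simp add: d_def sum_subtractf)
  \<comment> \<open>Since d has total mass 0, the column minima m y can be subtracted from K for free.\<close>
  hence diff: "(\<Sum>x\<in>UNIV. \<mu> x * K x y) - (\<Sum>x\<in>UNIV. \<nu> x * K x y) = (\<Sum>x\<in>UNIV. d x * (K x y - m y))"
    for y
  proof -
    have "(\<Sum>x\<in>UNIV. d x * (K x y - m y)) = (\<Sum>x\<in>UNIV. d x * K x y) - (\<Sum>x\<in>UNIV. d x) * m y"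
      by (simp add: right_diff_distrib sum_subtractf sum_distrib_right)
    thus ?thesis using \<open>(\<Sum>x\<in>UNIV. d x) = 0\<close> by (simp add: d_def left_diff_distrib sum_subtractf)
  qed
  have "(\<Sum>y\<in>UNIV. \<bar>\<Sum>x\<in>UNIV. d x * (K x y - m y)\<bar>) \<le> (\<Sum>y\<in>UNIV. \<Sum>x\<in>UNIV. \<bar>d x\<bar> * (K x y - m y))"
    by (intro sum_mono order.trans[OF sum_abs]) (simp add: abs_mult m_def)
  also have "\<dots> = (\<Sum>x\<in>UNIV. \<Sum>y\<in>UNIV. \<bar>d x\<bar> * (K x y - m y))"
    by (rule sum.swap)
  also have "\<dots> = (\<Sum>x\<in>UNIV. \<bar>d x\<bar> * ((\<Sum>y\<in>UNIV. K x y) - (\<Sum>y\<in>UNIV. m y)))"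
    by (simp add: sum_distrib_left[symmetric] sum_subtractf)
  also have "\<dots> = (1 - (\<Sum>y\<in>UNIV. m y)) * (\<Sum>x\<in>UNIV. \<bar>d x\<bar>)"
    by (simp add: stochastic_row_sum[OF K] sum_distrib_left mult.commute)
  finally show ?thesis
    unfolding var_dist_def diff by (simp add: m_def d_def)
qed

lemma var_dist_mat_pow_le_1:
  assumes "stochastic P" and "stationary P \<pi>"
  shows "var_dist (mat_pow P n x) \<pi> \<le> 1"
  using stochastic_mat_pow[OF assms(1)] assms(2)
  by (simp add: var_dist_le_1 stochastic_nonneg stochastic_row_sum stationary_def)

lemma var_dist_mat_pow_add_le:
  assumes "stochastic P" and "stationary P \<pi>"
  shows "var_dist (mat_pow P (m + n) x) \<pi>
       \<le> (1 - (\<Sum>y\<in>UNIV. Min (range (\<lambda>z. mat_pow P n z y)))) * var_dist (mat_pow P m x) \<pi>"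
proof -
  have row: "mat_pow P (m + n) x = (\<lambda>y. \<Sum>z\<in>UNIV. mat_pow P m x z * mat_pow P n z y)"
    by (simp add: mat_pow_add mat_mult_def)
  have \<pi>: "\<pi> = (\<lambda>y. \<Sum>z\<in>UNIV. \<pi> z * mat_pow P n z y)"
    using stationary_mat_pow[OF assms(2)] by simp
  have "(\<Sum>z\<in>UNIV. mat_pow P m x z) = (\<Sum>z\<in>UNIV. \<pi> z)"
    using stochastic_row_sum[OF stochastic_mat_pow[OF assms(1)]] assms(2)
    by (simp add: stationary_def)
  from var_dist_mult_stochastic_le[OF stochastic_mat_pow[OF assms(1)] this]
  show ?thesis by (subst row, subst (1) \<pi>)
qed

lemma ergodic_converges:
  assumes erg: "ergodic P" and stat: "stationary P \<pi>" and "0 < \<epsilon>"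
  shows "\<exists>T. \<forall>t\<ge>T. \<forall>x. var_dist (mat_pow P t x) \<pi> \<le> \<epsilon>"
proof -
  have st: "stochastic P" using erg by (simp add: ergodic_def)
  obtain N where N: "\<And>x y. 0 < mat_pow P N x y"
    using ergodic_eventually_positive[OF erg] unfolding eventually_sequentially by auto
  define \<theta> where "\<theta> = (\<Sum>y\<in>UNIV. Min (range (\<lambda>z. mat_pow P N z y)))"
  have "0 < \<theta>" unfolding \<theta>_def using N by (intro sum_pos) auto
  have geometric: "var_dist (mat_pow P (r + q * N) x) \<pi> \<le> (1 - \<theta>) ^ q" for r q x
  proof (induction q)
    case 0
    show ?case using var_dist_mat_pow_le_1[OF st stat] by simp
  next
    case (Suc q)
    have "\<theta> \<le> (\<Sum>y\<in>UNIV. mat_pow P N x y)" unfolding \<theta>_def by (intro sum_mono) simp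
    hence "\<theta> \<le> 1" using stochastic_row_sum[OF stochastic_mat_pow[OF st]] by simp
    have "var_dist (mat_pow P (r + q * N + N) x) \<pi> \<le> (1 - \<theta>) * var_dist (mat_pow P (r + q * N) x) \<pi>"
      unfolding \<theta>_def by (rule var_dist_mat_pow_add_le[OF st stat])
    also have "\<dots> \<le> (1 - \<theta>) * (1 - \<theta>) ^ q"
      using Suc.IH \<open>\<theta> \<le> 1\<close> by (intro mult_left_mono) auto
    finally show ?case by (simp add: algebra_simps)
  qed
  obtain q where "(1 - \<theta>) ^ q < \<epsilon>" using real_arch_pow_inv[OF \<open>0 < \<epsilon>\<close>, of "1 - \<theta>"] \<open>0 < \<theta>\<close> by auto
  hence "var_dist (mat_pow P t x) \<pi> \<le> \<epsilon>" if "q * N \<le> t" for t x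
    using geometric[of "t - q * N" q x] that by simp
  thus ?thesis by blast
qed

lemma mix_time:
  assumes "ergodic P" and "stationary P \<pi>" and "0 < \<epsilon>"
  shows mix_time_pos: "0 < mix_time P \<pi> \<epsilon>"
    and mixed_after_mix_time: "mix_time P \<pi> \<epsilon> \<le> t \<Longrightarrow> var_dist (mat_pow P t x) \<pi> \<le> \<epsilon>"
proof -
  obtain T where T: "\<And>t x. T \<le> t \<Longrightarrow> var_dist (mat_pow P t x) \<pi> \<le> \<epsilon>"
    using ergodic_converges[OF assms] by blast
  define mixed where "mixed x t \<longleftrightarrow> 0 < t \<and> (\<forall>t'\<ge>t. var_dist (mat_pow P t' x) \<pi> \<le> \<epsilon>)" for x t
  have "mixed x (mix_time_from P \<pi> \<epsilon> x)" for x
    unfolding mix_time_from_def mixed_def[symmetric] by (rule LeastI[of _ "Suc T"]) (simp add: mixed_def T)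
  moreover have "mix_time_from P \<pi> \<epsilon> x \<le> mix_time P \<pi> \<epsilon>" for x
    unfolding mix_time_def by simp
  ultimately show "0 < mix_time P \<pi> \<epsilon>"
    and "mix_time P \<pi> \<epsilon> \<le> t \<Longrightarrow> var_dist (mat_pow P t x) \<pi> \<le> \<epsilon>"
    unfolding mixed_def by (fastforce intro: order.strict_trans2, blast intro: order.trans)
qed

section \<open>The continuized chain\<close>

lemma exp_sums_real: "(\<lambda>j. t ^ j / fact j) sums exp (t::real)"
  using exp_converges[of t] by (simp add: divide_inverse mult.commute scaleR_conv_of_real)

lemma poisson_weight_Suc: "t ^ Suc j / fact (Suc j) * real (Suc j) = t * (t ^ j / fact j :: real)"
  by (simp del: of_nat_Suc add: field_simps)

lemma poisson_first_moment_sums: "(\<lambda>j. t ^ j / fact j * real j) sums (t * exp t)"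
proof -
  have "(\<lambda>j. t ^ Suc j / fact (Suc j) * real (Suc j)) sums (t * exp t)"
    unfolding poisson_weight_Suc by (intro sums_mult exp_sums_real)
  thus ?thesis by (subst (asm) sums_Suc_iff) simp
qed

lemma poisson_second_moment_sums: "(\<lambda>j. t ^ j / fact j * (real j)^2) sums (exp t * (t^2 + t))"
proof -
  have "t ^ Suc j / fact (Suc j) * (real (Suc j))^2 = t * (t ^ j / fact j) * real (Suc j)" for j
    by (simp only: power2_eq_square mult.assoc[symmetric] poisson_weight_Suc)
  hence "(\<lambda>j. t ^ Suc j / fact (Suc j) * (real (Suc j))^2)
      = (\<lambda>j. t * (t ^ j / fact j * real j) + t * (t ^ j / fact j))"
    by (simp add: algebra_simps add_divide_distrib)
  moreover have "(\<lambda>j. t * (t ^ j / fact j * real j) + t * (t ^ j / fact j)) sums (t * (t * exp t) + t * exp t)"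
    by (intro sums_add sums_mult exp_sums_real poisson_first_moment_sums)
  moreover have "t * (t * exp t) + t * exp t = exp t * (t^2 + t)"
    by (simp add: algebra_simps power2_eq_square)
  ultimately have "(\<lambda>j. t ^ Suc j / fact (Suc j) * (real (Suc j))^2) sums (exp t * (t^2 + t))"
    by simp
  thus ?thesis by (subst (asm) sums_Suc_iff) simp
qed

lemma summable_poisson_average:
  fixes d :: "nat \<Rightarrow> real"
  assumes "0 \<le> t" and "\<And>j. 0 \<le> d j" and "\<And>j. d j \<le> 1"
  shows "summable (\<lambda>j. t ^ j / fact j * d j)"
proof (rule summable_comparison_test[OF _ exp_sums_real[THEN sums_summable]])
  have "norm (t ^ j / fact j * d j) \<le> t ^ j / fact j" for j
    using assms mult_left_le[of "d j" "t ^ j"] by (simp add: divide_right_mono)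
  thus "\<exists>N. \<forall>j\<ge>N. norm (t ^ j / fact j * d j) \<le> t ^ j / fact j" by blast
qed

lemma poisson_average_le:
  fixes d :: "nat \<Rightarrow> real"
  assumes "0 \<le> t" and "\<And>j. 0 \<le> d j" and "\<And>j. d j \<le> 1"
    and "0 \<le> \<delta>" and "\<And>j. J \<le> j \<Longrightarrow> d j \<le> \<delta>"
  shows "exp (- t) * (\<Sum>j. t ^ j / fact j * d j) \<le> (\<Sum>j<J. t ^ j / exp t / fact j) + \<delta>"
proof -
  define w where "w j = t ^ j / fact j" for j :: nat
  have "w j * d j \<le> (if j \<in> {..<J} then w j else 0) + \<delta> * w j" for j
  proof -
    have "d j \<le> (if j < J then 1 else 0) + \<delta>"
      using assms(3)[of j] assms(4) assms(5)[of j] by auto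
    moreover have "0 \<le> w j" using \<open>0 \<le> t\<close> by (simp add: w_def)
    ultimately show ?thesis by (auto dest: mult_left_mono[of _ _ "w j"] simp: algebra_simps)
  qed
  moreover have "(\<lambda>j. w j * d j) sums (\<Sum>j. w j * d j)"
    using summable_poisson_average[OF assms(1-3)] by (simp add: w_def summable_sums)
  moreover have "(\<lambda>j. (if j \<in> {..<J} then w j else 0) + \<delta> * w j) sums ((\<Sum>j<J. w j) + \<delta> * exp t)"
    unfolding w_def by (intro sums_add sums_If_finite_set sums_mult exp_sums_real) simp
  ultimately have "(\<Sum>j. w j * d j) \<le> (\<Sum>j<J. w j) + \<delta> * exp t"
    by (rule sums_le)
  hence "exp (- t) * (\<Sum>j. w j * d j) \<le> exp (- t) * ((\<Sum>j<J. w j) + \<delta> * exp t)"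
    by (rule mult_left_mono) simp
  also have "\<dots> = (\<Sum>j<J. t ^ j / exp t / fact j) + \<delta>"
    by (simp add: w_def sum_distrib_left exp_minus field_simps)
  finally show ?thesis by (simp add: w_def)
qed

lemma sum_binomial_alternating_Suc:
  fixes f :: "nat \<Rightarrow> real"
  shows "(\<Sum>j\<le>Suc n. real (Suc n choose j) * (-1) ^ (Suc n + j) * f j)
       = (\<Sum>j\<le>n. real (n choose j) * (-1) ^ (n + j) * f (Suc j))
         - (\<Sum>j\<le>n. real (n choose j) * (-1) ^ (n + j) * f j)"
proof -
  define b where "b n j = real (n choose j) * (-1) ^ (n + j)" for n j :: nat
  have pascal: "b (Suc n) (Suc j) = b n j - b n (Suc j)" for j
    unfolding b_def by (simp add: algebra_simps)
  have b0: "b (Suc n) 0 = - b n 0" unfolding b_def by simp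
  have "(\<Sum>j\<le>Suc n. b (Suc n) j * f j) = b (Suc n) 0 * f 0 + (\<Sum>j\<le>n. b (Suc n) (Suc j) * f (Suc j))"
    by (rule sum.atMost_Suc_shift)
  also have "\<dots> = (\<Sum>j\<le>n. b n j * f (Suc j)) - (b n 0 * f 0 + (\<Sum>j\<le>n. b n (Suc j) * f (Suc j)))"
    by (simp add: pascal b0 left_diff_distrib sum_subtractf)
  also have "b n 0 * f 0 + (\<Sum>j\<le>n. b n (Suc j) * f (Suc j)) = (\<Sum>j\<le>n. b n j * f j)"
    using sum.atMost_Suc_shift[of "\<lambda>j. b n j * f j" n] by (simp add: b_def binomial_eq_0)
  finally show ?thesis by (simp add: b_def)
qed

lemma mat_pow_gen_matrix:
  "mat_pow (gen_matrix P) n x y = (\<Sum>j\<le>n. real (n choose j) * (-1) ^ (n + j) * mat_pow P j x y)"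
proof (induction n arbitrary: y)
  case (Suc n)
  have "mat_pow (gen_matrix P) (Suc n) x y
      = (\<Sum>z\<in>UNIV. mat_pow (gen_matrix P) n x z * P z y) - mat_pow (gen_matrix P) n x y"
    using fun_cong[OF fun_cong[OF mat_mult_id_right]]
    by (simp add: mat_mult_def gen_matrix_def right_diff_distrib sum_subtractf)
  also have "(\<Sum>z\<in>UNIV. mat_pow (gen_matrix P) n x z * P z y)
      = (\<Sum>j\<le>n. real (n choose j) * (-1) ^ (n + j) * mat_pow P (Suc j) x y)"
    unfolding Suc.IH
    by (simp add: mat_mult_def sum_distrib_left sum_distrib_right mult.assoc) (rule sum.swap)
  finally show ?case unfolding Suc.IH sum_binomial_alternating_Suc .
qed simp

definition mat_exp :: "('a::finite \<Rightarrow> 'a \<Rightarrow> real) \<Rightarrow> real \<Rightarrow> 'a \<Rightarrow> 'a \<Rightarrow> real" where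
  "mat_exp P t x y = (\<Sum>j. t ^ j / fact j * mat_pow P j x y)"

lemma summable_abs_mat_exp_terms:
  assumes "stochastic P"
  shows "summable (\<lambda>j. \<bar>t ^ j / fact j * mat_pow P j x y\<bar>)"
proof (rule summable_comparison_test[OF _ exp_sums_real[of "\<bar>t\<bar>", THEN sums_summable]])
  have "\<bar>t ^ j / fact j * mat_pow P j x y\<bar> \<le> \<bar>t\<bar> ^ j / fact j" for j
    using stochastic_nonneg[OF stochastic_mat_pow[OF assms]] stochastic_le_1[OF stochastic_mat_pow[OF assms]]
    by (simp add: abs_mult power_abs divide_right_mono mult_left_le)
  thus "\<exists>N. \<forall>j\<ge>N. norm \<bar>t ^ j / fact j * mat_pow P j x y\<bar> \<le> \<bar>t\<bar> ^ j / fact j" by simp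
qed

lemma mat_exp_sums:
  assumes "stochastic P"
  shows "(\<lambda>j. t ^ j / fact j * mat_pow P j x y) sums mat_exp P t x y"
  unfolding mat_exp_def
  using summable_rabs_cancel[OF summable_abs_mat_exp_terms[OF assms]] by (rule summable_sums)

lemma exp_gen_eq_mat_exp:
  assumes "stochastic P"
  shows "exp_gen P t x y = exp (- t) * mat_exp P t x y"
proof -
  \<comment> \<open>Cauchy product of the series of exp(tP) and exp(-t), using the binomial expansion of (P - I)^k.\<close>
  define a where "a i = t ^ i / fact i * mat_pow P i x y" for i
  define b where "b i = (- t) ^ i / fact i" for i
  have cauchy_term: "a i * b (k - i) = t ^ k / fact k * (real (k choose i) * (-1) ^ (k + i) * mat_pow P i x y)"
    if "i \<le> k" for i k
  proof -
    have "t ^ i * (- t) ^ (k - i) = (-1) ^ (k + i) * t ^ k"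
      using that by (simp add: power_minus[of t] neg_one_power_add_eq_neg_one_power_diff
          power_add[symmetric] mult.left_commute)
    thus ?thesis
      using binomial_fact[OF that, where 'a=real] that
      by (simp add: a_def b_def field_simps)
  qed
  have cauchy_sum: "(\<Sum>i\<le>k. a i * b (k - i)) = t ^ k / fact k * mat_pow (gen_matrix P) k x y" for k
  proof -
    have "(\<Sum>i\<le>k. a i * b (k - i))
        = (\<Sum>i\<le>k. t ^ k / fact k * (real (k choose i) * (-1) ^ (k + i) * mat_pow P i x y))"
      by (rule sum.cong) (simp_all add: cauchy_term)
    thus ?thesis by (simp add: mat_pow_gen_matrix sum_distrib_left)
  qed
  have "mat_exp P t x y * exp (- t) = (\<Sum>k. \<Sum>i\<le>k. a i * b (k - i))"
    unfolding mat_exp_def a_def[symmetric]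
      sums_unique[OF exp_sums_real[of "- t"], folded b_def]
  proof (rule Cauchy_product)
    show "summable (\<lambda>k. norm (a k))"
      unfolding a_def real_norm_def by (rule summable_abs_mat_exp_terms[OF assms])
    show "summable (\<lambda>k. norm (b k))"
      using exp_sums_real[of "\<bar>t\<bar>", THEN sums_summable] by (simp add: b_def power_abs)
  qed
  also have "\<dots> = exp_gen P t x y"
    unfolding cauchy_sum exp_gen_def ..
  finally show ?thesis by (simp add: mult.commute)
qed

lemma stochastic_exp_gen:
  assumes "stochastic P" and "0 \<le> t"
  shows "stochastic (exp_gen P t)"
proof -
  have "mat_exp P t x y \<ge> 0" for x y
    unfolding mat_exp_def
    using stochastic_nonneg[OF stochastic_mat_pow[OF assms(1)]] assms(2)
    by (intro suminf_nonneg summable_rabs_cancel[OF summable_abs_mat_exp_terms[OF assms(1)]]) auto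
  moreover have "(\<Sum>y\<in>UNIV. mat_exp P t x y) = exp t" for x
  proof -
    have "(\<lambda>j. \<Sum>y\<in>UNIV. t ^ j / fact j * mat_pow P j x y) sums (\<Sum>y\<in>UNIV. mat_exp P t x y)"
      by (intro sums_sum mat_exp_sums[OF assms(1)])
    moreover have "(\<lambda>j. \<Sum>y\<in>UNIV. t ^ j / fact j * mat_pow P j x y) = (\<lambda>j. t ^ j / fact j)"
      using stochastic_row_sum[OF stochastic_mat_pow[OF assms(1)]]
      by (simp add: sum_divide_distrib[symmetric] sum_distrib_left[symmetric])
    ultimately show ?thesis using sums_unique2 exp_sums_real by metis
  qed
  ultimately show ?thesis
    by (simp add: stochastic_def exp_gen_eq_mat_exp[OF assms(1)] sum_distrib_left[symmetric] exp_minus)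
qed

lemma exp_gen_diag_ge:
  assumes "stochastic P" and "0 \<le> t"
  shows "exp (- t) \<le> exp_gen P t x x"
proof -
  have "(\<Sum>j\<in>{0}. t ^ j / fact j * mat_pow P j x x) \<le> mat_exp P t x x"
    unfolding mat_exp_def
    using stochastic_nonneg[OF stochastic_mat_pow[OF assms(1)]] assms(2)
    by (intro sum_le_suminf summable_rabs_cancel[OF summable_abs_mat_exp_terms[OF assms(1)]]) auto
  thus ?thesis by (simp add: exp_gen_eq_mat_exp[OF assms(1)] mat_id_def)
qed

lemma var_dist_exp_gen_le:
  assumes st: "stochastic P" and stat: "stationary P \<pi>" and "0 \<le> t"
  shows "var_dist (exp_gen P t x) \<pi> \<le> exp (- t) * (\<Sum>j. t ^ j / fact j * var_dist (mat_pow P j x) \<pi>)"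
proof -
  define w where "w j = t ^ j / fact j" for j :: nat
  define f where "f y j = w j * (mat_pow P j x y - \<pi> y)" for y j
  have w_nonneg: "w j \<ge> 0" for j using \<open>0 \<le> t\<close> by (simp add: w_def)
  have f_sums: "f y sums (mat_exp P t x y - exp t * \<pi> y)" for y
    unfolding f_def w_def right_diff_distrib
    by (intro sums_diff mat_exp_sums[OF st] sums_mult2 exp_sums_real)
  have abs_f: "summable (\<lambda>j. \<bar>f y j\<bar>)" for y
  proof (rule summable_comparison_test)
    show "summable (\<lambda>j. \<bar>w j * mat_pow P j x y\<bar> + w j * \<bar>\<pi> y\<bar>)"
      unfolding w_def
      by (intro summable_add summable_abs_mat_exp_terms[OF st] summable_mult2 exp_sums_real[THEN sums_summable])
    have "\<bar>f y j\<bar> \<le> \<bar>w j * mat_pow P j x y\<bar> + w j * \<bar>\<pi> y\<bar>" for j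
      using abs_triangle_ineq4[of "w j * mat_pow P j x y" "w j * \<pi> y"] w_nonneg[of j]
      by (simp add: f_def right_diff_distrib abs_mult)
    thus "\<exists>N. \<forall>j\<ge>N. norm \<bar>f y j\<bar> \<le> \<bar>w j * mat_pow P j x y\<bar> + w j * \<bar>\<pi> y\<bar>" by simp
  qed
  have "(\<Sum>y\<in>UNIV. \<bar>exp_gen P t x y - \<pi> y\<bar>) = exp (- t) * (\<Sum>y\<in>UNIV. \<bar>suminf (f y)\<bar>)"
    by (simp add: exp_gen_eq_mat_exp[OF st] sums_unique[OF f_sums, symmetric] sum_distrib_left
        abs_mult right_diff_distrib exp_minus field_simps)
  also have "\<dots> \<le> exp (- t) * (\<Sum>y\<in>UNIV. \<Sum>j. \<bar>f y j\<bar>)"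
    by (intro mult_left_mono sum_mono summable_rabs abs_f) simp_all
  also have "(\<Sum>y\<in>UNIV. \<Sum>j. \<bar>f y j\<bar>) = (\<Sum>j. \<Sum>y\<in>UNIV. \<bar>f y j\<bar>)"
    by (intro suminf_sum[symmetric] abs_f)
  also have "\<dots> = (\<Sum>j. w j * (\<Sum>y\<in>UNIV. \<bar>mat_pow P j x y - \<pi> y\<bar>))"
    by (simp add: f_def abs_mult abs_of_nonneg[OF w_nonneg] sum_distrib_left)
  also have "\<dots> = 2 * (\<Sum>j. w j * var_dist (mat_pow P j x) \<pi>)"
    using summable_poisson_average[OF \<open>0 \<le> t\<close> var_dist_nonneg var_dist_mat_pow_le_1[OF st stat]]
    by (simp add: var_dist_def w_def suminf_mult[symmetric] mult_ac)
  finally show ?thesis by (simp add: var_dist_def w_def)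
qed

lemma exp_gen_converges:
  assumes erg: "ergodic P" and stat: "stationary P \<pi>" and "0 < \<epsilon>"
  shows "\<exists>T. \<forall>t\<ge>T. \<forall>x. var_dist (exp_gen P t x) \<pi> \<le> \<epsilon>"
proof -
  have st: "stochastic P" using erg by (simp add: ergodic_def)
  obtain J where J: "\<And>j x. J \<le> j \<Longrightarrow> var_dist (mat_pow P j x) \<pi> \<le> \<epsilon> / 2"
    using ergodic_converges[OF erg stat, of "\<epsilon> / 2"] \<open>0 < \<epsilon>\<close> by auto
  have "((\<lambda>t::real. \<Sum>j<J. t ^ j / exp t / fact j) \<longlongrightarrow> 0) at_top"
    by (intro tendsto_null_sum tendsto_divide_zero tendsto_power_div_exp_0)
  hence "eventually (\<lambda>t. (\<Sum>j<J. t ^ j / exp t / fact j) < \<epsilon> / 2) at_top"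
    using \<open>0 < \<epsilon>\<close> by (intro order_tendstoD(2)) auto
  then obtain T where T: "\<And>t. T \<le> t \<Longrightarrow> (\<Sum>j<J. t ^ j / exp t / fact j) < \<epsilon> / 2"
    unfolding eventually_at_top_linorder by blast
  have "var_dist (exp_gen P t x) \<pi> \<le> \<epsilon>" if "max T 0 \<le> t" for t x
  proof -
    have "var_dist (exp_gen P t x) \<pi> \<le> exp (- t) * (\<Sum>j. t ^ j / fact j * var_dist (mat_pow P j x) \<pi>)"
      using var_dist_exp_gen_le[OF st stat] that by simp
    also have "\<dots> \<le> (\<Sum>j<J. t ^ j / exp t / fact j) + \<epsilon> / 2"
      using that \<open>0 < \<epsilon>\<close>
      by (intro poisson_average_le var_dist_nonneg var_dist_mat_pow_le_1[OF st stat] J) simp_all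
    also have "\<dots> \<le> \<epsilon>" using T[of t] that by simp
    finally show ?thesis .
  qed
  thus ?thesis by blast
qed

lemma cmix_time:
  assumes "ergodic P" and "stationary P \<pi>" and "0 < \<epsilon>"
  shows cmix_time_nonneg: "0 \<le> cmix_time P \<pi> \<epsilon>"
    and mixed_after_cmix_time: "cmix_time P \<pi> \<epsilon> < t \<Longrightarrow> var_dist (exp_gen P t x) \<pi> \<le> \<epsilon>"
proof -
  obtain T where T: "\<And>t x. T \<le> t \<Longrightarrow> var_dist (exp_gen P t x) \<pi> \<le> \<epsilon>"
    using exp_gen_converges[OF assms] by blast
  define S where "S x = {t. 0 < t \<and> (\<forall>t'. t \<le> t' \<longrightarrow> var_dist (exp_gen P t' x) \<pi> \<le> \<epsilon>)}" for x
  have "max T 1 \<in> S x" for x unfolding S_def using T by auto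
  hence ne: "S x \<noteq> {}" for x by auto
  have bdd: "bdd_below (S x)" for x unfolding S_def by (rule bdd_belowI[of _ 0]) auto
  have le: "Inf (S x) \<le> cmix_time P \<pi> \<epsilon>" for x
    unfolding cmix_time_def cmix_time_from_def S_def[symmetric] by simp
  have "0 \<le> Inf (S undefined)" using ne unfolding S_def by (intro cInf_greatest) auto
  thus "0 \<le> cmix_time P \<pi> \<epsilon>" using le by (rule order.trans)
  assume "cmix_time P \<pi> \<epsilon> < t"
  hence "Inf (S x) < t" using le[of x] by simp
  then obtain s where "s \<in> S x" "s < t" using cInf_less_iff[OF ne bdd] by blast
  thus "var_dist (exp_gen P t x) \<pi> \<le> \<epsilon>" unfolding S_def by auto
qed

lemma cmix_time_ge_quarter:
  fixes P :: "'a::finite \<Rightarrow> 'a \<Rightarrow> real" and x1 x2 :: 'a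
  assumes erg: "ergodic P" and stat: "stationary P \<pi>" and "0 < \<epsilon>" "\<epsilon> \<le> 1/4"
    and "x1 \<noteq> x2"
  shows "1/4 \<le> cmix_time P \<pi> \<epsilon>"
proof (rule ccontr)
  \<comment> \<open>Before time 1/4 the continuized chain stays at its start with probability above 3/4,
    which is too much for a state of stationary mass at most 1/2.\<close>
  assume "\<not> 1/4 \<le> cmix_time P \<pi> \<epsilon>"
  have st: "stochastic P" using erg by (simp add: ergodic_def)
  have "(\<Sum>x\<in>{x1, x2}. \<pi> x) \<le> (\<Sum>x\<in>UNIV. \<pi> x)"
    using stat by (intro sum_mono2) (auto simp: stationary_def)
  hence "\<pi> x1 + \<pi> x2 \<le> 1" using \<open>x1 \<noteq> x2\<close> stat by (simp add: stationary_def)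
  then obtain x where x: "\<pi> x \<le> 1/2"
    by (cases "\<pi> x1 \<le> 1/2") (auto intro: that[of x1] that[of x2])
  define t where "t = (cmix_time P \<pi> \<epsilon> + 1/4) / 2"
  have "cmix_time P \<pi> \<epsilon> < t" "t < 1/4" "0 \<le> t"
    using \<open>\<not> 1/4 \<le> cmix_time P \<pi> \<epsilon>\<close> cmix_time_nonneg[OF erg stat \<open>0 < \<epsilon>\<close>] by (auto simp: t_def)
  have "exp_gen P t x x - \<pi> x \<le> var_dist (exp_gen P t x) \<pi>"
    using sum_diff_le_var_dist[of "exp_gen P t x" \<pi> "{x}"] stochastic_exp_gen[OF st \<open>0 \<le> t\<close>] stat
    by (simp add: stochastic_row_sum stationary_def)
  moreover have "var_dist (exp_gen P t x) \<pi> \<le> \<epsilon>"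
    by (rule mixed_after_cmix_time[OF erg stat \<open>0 < \<epsilon>\<close> \<open>cmix_time P \<pi> \<epsilon> < t\<close>])
  moreover have "3/4 < exp (- t)"
    using exp_ge_add_one_self[of "- t"] \<open>t < 1/4\<close> by linarith
  ultimately show False
    using exp_gen_diag_ge[OF st \<open>0 \<le> t\<close>, of x] x \<open>\<epsilon> \<le> 1/4\<close> by linarith
qed

section \<open>Energy of a kernel\<close>

definition energy :: "('a::finite \<Rightarrow> 'a \<Rightarrow> real) \<Rightarrow> ('a \<Rightarrow> real) \<Rightarrow> ('a \<Rightarrow> real) \<Rightarrow> real" where
  "energy K \<pi> g = (\<Sum>x\<in>UNIV. \<Sum>y\<in>UNIV. \<pi> x * K x y * (g y - g x)^2)"

lemma dirichlet_eq_energy: "dirichlet P \<pi> g = energy P \<pi> g / 2"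
  unfolding energy_def dirichlet_def by (simp add: power2_commute)

lemma sq_add_le_weighted:
  fixes u v c :: real
  assumes "0 < c"
  shows "(u + v)^2 \<le> (1 + 1/c) * u^2 + (1 + c) * v^2"
proof -
  have "c * ((1 + 1/c) * u^2 + (1 + c) * v^2 - (u + v)^2) = (u - c * v)^2"
    using assms by (simp add: field_simps power2_eq_square)
  hence "0 \<le> c * ((1 + 1/c) * u^2 + (1 + c) * v^2 - (u + v)^2)" by simp
  thus ?thesis using assms by (simp add: zero_le_mult_iff)
qed

lemma energy_mat_mult_le:
  assumes A: "\<And>x y. 0 \<le> A x y" and B: "stochastic B" and \<pi>: "\<And>x. 0 \<le> \<pi> x"
    and A_\<pi>: "\<And>z. (\<Sum>x\<in>UNIV. \<pi> x * A x z) = \<pi> z" and "0 < c"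
  shows "energy (mat_mult A B) \<pi> g \<le> (1 + 1/c) * energy A \<pi> g + (1 + c) * energy B \<pi> g"
proof -
  define w where "w x z y = \<pi> x * A x z * B z y" for x z y
  have "energy (mat_mult A B) \<pi> g = (\<Sum>x\<in>UNIV. \<Sum>z\<in>UNIV. \<Sum>y\<in>UNIV. w x z y * (g y - g x)^2)"
    unfolding energy_def mat_mult_def w_def
    by (simp add: sum_distrib_left sum_distrib_right mult.assoc) (intro sum.cong refl sum.swap)
  \<comment> \<open>Split each step x \<rightarrow> y of the product chain at its intermediate state z.\<close>
  also have "\<dots> \<le> (\<Sum>x\<in>UNIV. \<Sum>z\<in>UNIV. \<Sum>y\<in>UNIV.
      (1 + 1/c) * (w x z y * (g z - g x)^2) + (1 + c) * (w x z y * (g y - g z)^2))"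
  proof (intro sum_mono)
    fix x z y
    have "0 \<le> w x z y" using A B \<pi> by (simp add: w_def stochastic_nonneg)
    from mult_left_mono[OF sq_add_le_weighted[OF \<open>0 < c\<close>, of "g z - g x" "g y - g z"] this]
    show "w x z y * (g y - g x)^2 \<le> (1 + 1/c) * (w x z y * (g z - g x)^2) + (1 + c) * (w x z y * (g y - g z)^2)"
      by (simp add: algebra_simps)
  qed
  also have "\<dots> = (1 + 1/c) * (\<Sum>x\<in>UNIV. \<Sum>z\<in>UNIV. \<Sum>y\<in>UNIV. w x z y * (g z - g x)^2)
      + (1 + c) * (\<Sum>x\<in>UNIV. \<Sum>z\<in>UNIV. \<Sum>y\<in>UNIV. w x z y * (g y - g z)^2)"
    by (simp add: sum.distrib sum_distrib_left)
  also have "(\<Sum>x\<in>UNIV. \<Sum>z\<in>UNIV. \<Sum>y\<in>UNIV. w x z y * (g z - g x)^2) = energy A \<pi> g"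
  proof -
    have "(\<Sum>y\<in>UNIV. w x z y * (g z - g x)^2) = \<pi> x * A x z * (g z - g x)^2 * (\<Sum>y\<in>UNIV. B z y)" for x z
      by (simp add: w_def sum_distrib_left sum_distrib_right mult_ac)
    thus ?thesis by (simp add: energy_def stochastic_row_sum[OF B])
  qed
  also have "(\<Sum>x\<in>UNIV. \<Sum>z\<in>UNIV. \<Sum>y\<in>UNIV. w x z y * (g y - g z)^2)
      = (\<Sum>z\<in>UNIV. \<Sum>y\<in>UNIV. \<Sum>x\<in>UNIV. w x z y * (g y - g z)^2)"
    by (subst sum.swap) (intro sum.cong refl sum.swap)
  also have "\<dots> = energy B \<pi> g"
    by (simp add: energy_def w_def A_\<pi> sum_distrib_right[symmetric])
  finally show ?thesis .
qed

lemma energy_mat_pow_le: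
  assumes st: "stochastic P" and stat: "stationary P \<pi>"
  shows "energy (mat_pow P n) \<pi> g \<le> (real n)^2 * energy P \<pi> g"
proof (induction n)
  case 0
  have "energy (mat_pow P 0) \<pi> g = 0" by (auto simp: energy_def mat_id_def intro!: sum.neutral)
  thus ?case by simp
next
  case (Suc n)
  show ?case
  proof (cases "n = 0")
    case False
    have "energy (mat_pow P (Suc n)) \<pi> g
        \<le> (1 + 1 / real n) * energy (mat_pow P n) \<pi> g + (1 + real n) * energy P \<pi> g"
      unfolding mat_pow.simps
      using stochastic_nonneg[OF stochastic_mat_pow[OF st]] stationary_mat_pow[OF stat] stat False
      by (intro energy_mat_mult_le[OF _ st]) (auto simp: stationary_def)
    also have "\<dots> \<le> (1 + 1 / real n) * ((real n)^2 * energy P \<pi> g) + (1 + real n) * energy P \<pi> g"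
      using Suc.IH by (intro add_right_mono mult_left_mono) auto
    also have "\<dots> = (real (Suc n))^2 * energy P \<pi> g"
      using False by (simp add: field_simps power2_eq_square)
    finally show ?thesis .
  qed simp
qed

lemma energy_exp_gen_le:
  assumes st: "stochastic P" and stat: "stationary P \<pi>" and "0 \<le> t"
  shows "energy (exp_gen P t) \<pi> g \<le> (t^2 + t) * energy P \<pi> g"
proof -
  have termwise: "t ^ j / fact j * energy (mat_pow P j) \<pi> g \<le> t ^ j / fact j * (real j)^2 * energy P \<pi> g" for j
    using mult_left_mono[OF energy_mat_pow_le[OF st stat, of j g], of "t ^ j / fact j"] \<open>0 \<le> t\<close>
    by (simp add: mult.assoc)
  have "(\<lambda>j. \<Sum>x\<in>UNIV. \<Sum>y\<in>UNIV. \<pi> x * (t ^ j / fact j * mat_pow P j x y) * (g y - g x)^2)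
      sums energy (mat_exp P t) \<pi> g"
    unfolding energy_def by (intro sums_sum sums_mult sums_mult2 mat_exp_sums[OF st])
  hence mixture: "(\<lambda>j. t ^ j / fact j * energy (mat_pow P j) \<pi> g) sums energy (mat_exp P t) \<pi> g"
    by (simp add: energy_def sum_distrib_left mult_ac)
  have moment: "(\<lambda>j. t ^ j / fact j * (real j)^2 * energy P \<pi> g) sums (exp t * (t^2 + t) * energy P \<pi> g)"
    by (intro sums_mult2 poisson_second_moment_sums)
  have "energy (exp_gen P t) \<pi> g = exp (- t) * energy (mat_exp P t) \<pi> g"
    by (simp add: energy_def exp_gen_eq_mat_exp[OF st] sum_distrib_left mult_ac)
  also have "\<dots> \<le> exp (- t) * (exp t * (t^2 + t) * energy P \<pi> g)"
    using sums_le[OF termwise mixture moment] by (rule mult_left_mono) simp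
  also have "\<dots> = (t^2 + t) * energy P \<pi> g"
    by (simp add: exp_minus)
  finally show ?thesis .
qed

lemma energy_ge_of_mixing:
  assumes K: "stochastic K" and mix: "\<And>x. var_dist (K x) \<pi> \<le> \<epsilon>"
    and \<pi>: "\<And>x. 0 \<le> \<pi> x" "(\<Sum>x\<in>UNIV. \<pi> x) = 1"
    and half: "1/2 \<le> (\<Sum>y | g y = 0. \<pi> y)"
  shows "(1/2 - \<epsilon>) * (\<Sum>x\<in>UNIV. \<pi> x * (g x)^2) \<le> energy K \<pi> g"
proof -
  \<comment> \<open>From every x, the kernel K reaches the zero set of g with probability at least 1/2 - \<epsilon>.\<close>
  let ?Z = "{y. g y = 0}"
  have "(1/2 - \<epsilon>) * (\<Sum>x\<in>UNIV. \<pi> x * (g x)^2) = (\<Sum>x\<in>UNIV. \<pi> x * (g x)^2 * (1/2 - \<epsilon>))"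
    by (simp add: sum_distrib_left mult_ac)
  also have "\<dots> \<le> (\<Sum>x\<in>UNIV. \<pi> x * (g x)^2 * (\<Sum>y\<in>?Z. K x y))"
  proof (intro sum_mono mult_left_mono)
    fix x
    show "1/2 - \<epsilon> \<le> (\<Sum>y\<in>?Z. K x y)"
      using sum_diff_le_var_dist[of \<pi> "K x" ?Z] stochastic_row_sum[OF K] \<pi>(2) mix[of x] half
      by (simp add: var_dist_commute)
  qed (simp add: \<pi>)
  also have "\<dots> = (\<Sum>x\<in>UNIV. \<Sum>y\<in>?Z. \<pi> x * K x y * (g y - g x)^2)"
    by (simp add: sum_distrib_left mult_ac)
  also have "\<dots> \<le> energy K \<pi> g"
    unfolding energy_def using \<pi> stochastic_nonneg[OF K] by (intro sum_mono sum_mono2) auto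
  finally show ?thesis .
qed

section \<open>Spectral gap from a mixing kernel\<close>

lemma exists_median:
  fixes \<phi> \<pi> :: "'a::finite \<Rightarrow> real"
  assumes \<pi>: "\<And>x. 0 \<le> \<pi> x" "(\<Sum>x\<in>UNIV. \<pi> x) = 1"
  shows "\<exists>m. 1/2 \<le> (\<Sum>x | \<phi> x \<le> m. \<pi> x) \<and> 1/2 \<le> (\<Sum>x | m \<le> \<phi> x. \<pi> x)"
proof -
  define F where "F v = (\<Sum>x | \<phi> x \<le> v. \<pi> x)" for v
  define V where "V = {v \<in> range \<phi>. 1/2 \<le> F v}"
  have "Max (range \<phi>) \<in> V" using \<pi>(2) by (simp add: V_def F_def)
  hence "V \<noteq> {}" by auto
  have "finite V" by (simp add: V_def)
  define m where "m = Min V"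
  have "m \<in> V" unfolding m_def using \<open>finite V\<close> \<open>V \<noteq> {}\<close> by (rule Min_in)
  have below: "(\<Sum>x | \<phi> x < m. \<pi> x) < 1/2"
  proof (cases "{x. \<phi> x < m} = {}")
    case False
    \<comment> \<open>The values of \<phi> below m have a largest one v, and F v < 1/2 by minimality of m.\<close>
    define v where "v = Max (\<phi> ` {x. \<phi> x < m})"
    have "v \<in> \<phi> ` {x. \<phi> x < m}" unfolding v_def using False by simp
    hence "v < m" "v \<in> range \<phi>" by auto
    have "{x. \<phi> x \<le> v} = {x. \<phi> x < m}"
      using \<open>v < m\<close> by (auto simp: v_def)
    moreover have "v \<notin> V" using \<open>v < m\<close> Min_le[OF \<open>finite V\<close>, of v] by (auto simp: m_def)
    ultimately show ?thesis using \<open>v \<in> range \<phi>\<close> by (simp add: V_def F_def)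
  qed simp
  have "(\<Sum>x\<in>UNIV. \<pi> x) = (\<Sum>x | \<phi> x < m. \<pi> x) + (\<Sum>x | m \<le> \<phi> x. \<pi> x)"
    by (subst sum.union_disjoint[symmetric]) (auto intro: sum.cong)
  hence "1/2 \<le> (\<Sum>x | m \<le> \<phi> x. \<pi> x)" using below \<pi>(2) by linarith
  moreover have "1/2 \<le> (\<Sum>x | \<phi> x \<le> m. \<pi> x)" using \<open>m \<in> V\<close> by (simp add: V_def F_def)
  ultimately show ?thesis by blast
qed

lemma var_pi_le_sum_sq_dev:
  fixes \<phi> \<pi> :: "'a::finite \<Rightarrow> real"
  assumes "(\<Sum>x\<in>UNIV. \<pi> x) = 1"
  shows "var_pi \<pi> \<phi> \<le> (\<Sum>x\<in>UNIV. \<pi> x * (\<phi> x - m)^2)"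
proof -
  define \<mu> where "\<mu> = (\<Sum>y\<in>UNIV. \<pi> y * \<phi> y)"
  have "\<pi> x * (\<phi> x - m)^2 = \<pi> x * (\<phi> x - \<mu>)^2 + 2 * (\<mu> - m) * (\<pi> x * (\<phi> x - \<mu>)) + (\<mu> - m)^2 * \<pi> x"
    for x by (simp add: power2_eq_square algebra_simps)
  hence "(\<Sum>x\<in>UNIV. \<pi> x * (\<phi> x - m)^2)
      = var_pi \<pi> \<phi> + 2 * (\<mu> - m) * (\<Sum>x\<in>UNIV. \<pi> x * (\<phi> x - \<mu>)) + (\<mu> - m)^2 * (\<Sum>x\<in>UNIV. \<pi> x)"
    by (simp add: var_pi_def \<mu>_def[symmetric] sum.distrib sum_distrib_left[symmetric])
  also have "(\<Sum>x\<in>UNIV. \<pi> x * (\<phi> x - \<mu>)) = 0"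
    using assms by (simp add: \<mu>_def right_diff_distrib sum_subtractf sum_distrib_right[symmetric])
  finally show ?thesis using assms by simp
qed

lemma sq_diff_pos_part_add_sq_diff_neg_part_le:
  fixes a b :: real
  shows "(max a 0 - max b 0)^2 + (max (- a) 0 - max (- b) 0)^2 \<le> (a - b)^2"
proof -
  have "a * b \<le> 0" if "a \<ge> 0 \<longleftrightarrow> b < 0"
    using that by (auto intro: mult_nonneg_nonpos mult_nonpos_nonneg)
  thus ?thesis by (cases "0 \<le> a"; cases "0 \<le> b") (auto simp: power2_eq_square algebra_simps)
qed

lemma dirichlet_ge_var_if_half_vanishing:
  assumes P: "\<And>x y. 0 \<le> P x y" and \<pi>: "\<And>x. 0 \<le> \<pi> x" "(\<Sum>x\<in>UNIV. \<pi> x) = 1" and "0 \<le> c"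
    and half_vanishing: "\<And>g. (\<And>x. 0 \<le> g x) \<Longrightarrow> 1/2 \<le> (\<Sum>y | g y = 0. \<pi> y) \<Longrightarrow>
              c * (\<Sum>x\<in>UNIV. \<pi> x * (g x)^2) \<le> dirichlet P \<pi> g"
  shows "c * var_pi \<pi> \<phi> \<le> dirichlet P \<pi> \<phi>"
proof -
  obtain m where m: "1/2 \<le> (\<Sum>x | \<phi> x \<le> m. \<pi> x)" "1/2 \<le> (\<Sum>x | m \<le> \<phi> x. \<pi> x)"
    using exists_median[OF \<pi>] by blast
  define f where "f x = max (\<phi> x - m) 0" for x
  define h where "h x = max (m - \<phi> x) 0" for x
  have "{y. f y = 0} = {x. \<phi> x \<le> m}" "{y. h y = 0} = {x. m \<le> \<phi> x}"
    by (auto simp: f_def h_def max_def)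
  moreover have "0 \<le> f x" "0 \<le> h x" for x by (simp_all add: f_def h_def)
  ultimately have f: "c * (\<Sum>x\<in>UNIV. \<pi> x * (f x)^2) \<le> dirichlet P \<pi> f"
    and h: "c * (\<Sum>x\<in>UNIV. \<pi> x * (h x)^2) \<le> dirichlet P \<pi> h"
    using m by (simp_all add: half_vanishing)
  have split_sq: "\<pi> x * (\<phi> x - m)^2 = \<pi> x * (f x)^2 + \<pi> x * (h x)^2" for x
    by (auto simp: f_def h_def max_def power2_commute[of m])
  have "c * var_pi \<pi> \<phi> \<le> c * (\<Sum>x\<in>UNIV. \<pi> x * (\<phi> x - m)^2)"
    using var_pi_le_sum_sq_dev[OF \<pi>(2), of \<phi> m] \<open>0 \<le> c\<close> by (rule mult_left_mono)
  also have "\<dots> = c * (\<Sum>x\<in>UNIV. \<pi> x * (f x)^2) + c * (\<Sum>x\<in>UNIV. \<pi> x * (h x)^2)"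
    unfolding split_sq sum.distrib by (rule distrib_left)
  also have "\<dots> \<le> dirichlet P \<pi> f + dirichlet P \<pi> h"
    using f h by (rule add_mono)
  also have "\<dots> \<le> dirichlet P \<pi> \<phi>"
  proof -
    have "(f x - f y)^2 + (h x - h y)^2 \<le> (\<phi> x - \<phi> y)^2" for x y
      using sq_diff_pos_part_add_sq_diff_neg_part_le[of "\<phi> x - m" "\<phi> y - m"] by (simp add: f_def h_def)
    thus ?thesis
      unfolding dirichlet_def using P \<pi>(1)
      by (simp add: sum.distrib[symmetric] distrib_left[symmetric])
         (intro sum_mono mult_left_mono; simp)
  qed
  finally show ?thesis .
qed

lemma var_pi_pos:
  assumes "\<And>x. 0 < \<pi> x" and "\<phi> x \<noteq> \<phi> y"
  shows "0 < var_pi \<pi> \<phi>"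
proof -
  define \<mu> where "\<mu> = (\<Sum>y\<in>UNIV. \<pi> y * \<phi> y)"
  have "\<phi> x \<noteq> \<mu> \<or> \<phi> y \<noteq> \<mu>" using assms(2) by auto
  then obtain z where "\<phi> z \<noteq> \<mu>" by blast
  have "0 < \<pi> z * (\<phi> z - \<mu>)^2" using assms(1)[of z] \<open>\<phi> z \<noteq> \<mu>\<close> by simp
  also have "\<dots> \<le> var_pi \<pi> \<phi>"
    unfolding var_pi_def \<mu>_def[symmetric]
    by (intro member_le_sum) (auto intro: mult_nonneg_nonneg less_imp_le[OF assms(1)])
  finally show ?thesis .
qed

lemma lambda1_ge_if_dirichlet_ge_var:
  assumes "\<And>x. 0 < \<pi> x" and "\<And>\<phi>. c * var_pi \<pi> \<phi> \<le> dirichlet P \<pi> \<phi>"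
  shows "ereal c \<le> lambda1 P \<pi>"
  unfolding lambda1_def
proof (rule INF_greatest)
  fix \<phi> :: "'a \<Rightarrow> real"
  assume "\<phi> \<in> {\<phi>. \<exists>x y. \<phi> x \<noteq> \<phi> y}"
  hence "0 < var_pi \<pi> \<phi>" using var_pi_pos[of \<pi> \<phi>] assms(1) by blast
  thus "ereal c \<le> ereal (dirichlet P \<pi> \<phi> / var_pi \<pi> \<phi>)"
    using assms(2)[of \<phi>] by (simp add: le_divide_eq)
qed

lemma lambda1_eq_top_if_subsingleton:
  assumes "\<And>x y :: 'a::finite. x = y"
  shows "lambda1 (P :: 'a \<Rightarrow> 'a \<Rightarrow> real) \<pi> = \<infinity>"
proof -
  have "\<phi> x = \<phi> y" for \<phi> :: "'a \<Rightarrow> real" and x y using assms[of x y] by simp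
  hence "{\<phi> :: 'a \<Rightarrow> real. \<exists>x y. \<phi> x \<noteq> \<phi> y} = {}" by blast
  thus ?thesis by (simp add: lambda1_def top_ereal_def)
qed

lemma lambda1_ge_of_mixing_kernel:
  assumes P: "stochastic P" and \<pi>: "\<And>x. 0 < \<pi> x" "(\<Sum>x\<in>UNIV. \<pi> x) = 1"
    and K: "stochastic K" and mix: "\<And>x. var_dist (K x) \<pi> \<le> \<epsilon>" and "\<epsilon> \<le> 1/2"
    and comparison: "\<And>g. energy K \<pi> g \<le> C * energy P \<pi> g" and "0 < C"
  shows "ereal ((1/2 - \<epsilon>) / (2 * C)) \<le> lambda1 P \<pi>"
proof (intro lambda1_ge_if_dirichlet_ge_var \<pi>(1) dirichlet_ge_var_if_half_vanishing)
  show "\<And>x y. 0 \<le> P x y" "\<And>x. 0 \<le> \<pi> x" "(\<Sum>x\<in>UNIV. \<pi> x) = 1" "0 \<le> (1/2 - \<epsilon>) / (2 * C)"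
    using P \<pi> \<open>\<epsilon> \<le> 1/2\<close> \<open>0 < C\<close> by (auto simp: stochastic_nonneg less_imp_le)
  fix g :: "'a \<Rightarrow> real"
  assume "1/2 \<le> (\<Sum>y | g y = 0. \<pi> y)"
  from energy_ge_of_mixing[OF K mix less_imp_le[OF \<pi>(1)] \<pi>(2) this]
  have "(1/2 - \<epsilon>) * (\<Sum>x\<in>UNIV. \<pi> x * (g x)^2) \<le> 2 * C * dirichlet P \<pi> g"
    using comparison[of g] by (simp add: dirichlet_eq_energy)
  thus "(1/2 - \<epsilon>) / (2 * C) * (\<Sum>x\<in>UNIV. \<pi> x * (g x)^2) \<le> dirichlet P \<pi> g"
    using \<open>0 < C\<close> by (simp add: divide_simps mult_ac)
qed

section \<open>Mixing times bound the spectral gap\<close>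

lemma lambda1_ge_mix_time:
  assumes erg: "ergodic P" and stat: "stationary P \<pi>" and "0 < \<epsilon>" "\<epsilon> \<le> 1/2"
  shows "ereal ((1/2 - \<epsilon>) / (2 * (real (mix_time P \<pi> \<epsilon>))^2)) \<le> lambda1 P \<pi>"
proof -
  have st: "stochastic P" and "irreducible_chain P" using erg by (auto simp: ergodic_def)
  let ?\<tau> = "mix_time P \<pi> \<epsilon>"
  show ?thesis
  proof (rule lambda1_ge_of_mixing_kernel)
    show "\<And>x. 0 < \<pi> x" by (rule stationary_pos[OF st \<open>irreducible_chain P\<close> stat])
    show "(\<Sum>x\<in>UNIV. \<pi> x) = 1" using stat by (simp add: stationary_def)
    show "\<And>x. var_dist (mat_pow P ?\<tau> x) \<pi> \<le> \<epsilon>"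
      by (rule mixed_after_mix_time[OF erg stat \<open>0 < \<epsilon>\<close> order_refl])
    show "0 < (real ?\<tau>)^2" using mix_time_pos[OF erg stat \<open>0 < \<epsilon>\<close>] by simp
  qed (use st stat \<open>\<epsilon> \<le> 1/2\<close> in \<open>auto intro: stochastic_mat_pow energy_mat_pow_le\<close>)
qed

lemma lambda1_ge_cmix_time:
  fixes P :: "'a::finite \<Rightarrow> 'a \<Rightarrow> real" and x1 x2 :: 'a
  assumes erg: "ergodic P" and stat: "stationary P \<pi>" and "0 < \<epsilon>" "\<epsilon> \<le> 1/4" and "x1 \<noteq> x2"
  shows "ereal ((1/2 - \<epsilon>) / (2 * ((2 * cmix_time P \<pi> \<epsilon>)^2 + 2 * cmix_time P \<pi> \<epsilon>))) \<le> lambda1 P \<pi>"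
proof -
  have st: "stochastic P" and "irreducible_chain P" using erg by (auto simp: ergodic_def)
  define t where "t = 2 * cmix_time P \<pi> \<epsilon>"
  have "1/4 \<le> cmix_time P \<pi> \<epsilon>" by (rule cmix_time_ge_quarter[OF assms])
  hence "cmix_time P \<pi> \<epsilon> < t" "0 \<le> t" "0 < t^2 + t" by (auto simp: t_def add_pos_pos)
  have "ereal ((1/2 - \<epsilon>) / (2 * (t^2 + t))) \<le> lambda1 P \<pi>"
  proof (rule lambda1_ge_of_mixing_kernel)
    show "\<And>x. 0 < \<pi> x" by (rule stationary_pos[OF st \<open>irreducible_chain P\<close> stat])
    show "(\<Sum>x\<in>UNIV. \<pi> x) = 1" using stat by (simp add: stationary_def)
    show "\<And>x. var_dist (exp_gen P t x) \<pi> \<le> \<epsilon>"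
      by (rule mixed_after_cmix_time[OF erg stat \<open>0 < \<epsilon>\<close> \<open>cmix_time P \<pi> \<epsilon> < t\<close>])
  qed (use st stat \<open>\<epsilon> \<le> 1/4\<close> \<open>0 \<le> t\<close> \<open>0 < t^2 + t\<close> in \<open>auto intro: stochastic_exp_gen energy_exp_gen_le\<close>)
  thus ?thesis by (simp add: t_def)
qed

lemma sq_div_le_div_of_quarter_le:
  fixes a s :: real
  assumes "0 < a" "a \<le> 1/3" "1/4 \<le> s"
  shows "a^2 / (8 * s^2) \<le> a / (2 * ((2 * s)^2 + 2 * s))"
proof -
  have "0 < s" using assms(3) by simp
  have "s / 4 \<le> s * s" using mult_right_mono[OF assms(3), of s] \<open>0 < s\<close> by simp
  hence "a * (8 * s^2 + 4 * s) \<le> 1/3 * (8 * s^2 + 4 * s) \<and> 1/3 * (8 * s^2 + 4 * s) \<le> 8 * s^2"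
    using assms(2) \<open>0 < s\<close> by (intro conjI mult_right_mono) (auto simp: power2_eq_square)
  hence "a * (8 * s^2 + 4 * s) \<le> 8 * s^2" by linarith
  from mult_left_mono[OF this] assms(1)
  have "a^2 * (8 * s^2 + 4 * s) \<le> a * (8 * s^2)" by (simp add: power2_eq_square mult.assoc)
  hence "a^2 \<le> a * (8 * s^2) / (8 * s^2 + 4 * s)"
    using \<open>0 < s\<close> by (subst pos_le_divide_eq) (simp_all add: add_pos_pos)
  hence "a^2 / (8 * s^2) \<le> a / (8 * s^2 + 4 * s)"
    using \<open>0 < s\<close> by (subst pos_divide_le_eq) simp_all
  moreover have "2 * ((2 * s)^2 + 2 * s) = 8 * s^2 + 4 * s" by (simp add: power2_eq_square)
  ultimately show ?thesis by simp
qed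

theorem corollary20:
  fixes P :: "'a::finite \<Rightarrow> 'a \<Rightarrow> real" and \<pi> :: "'a \<Rightarrow> real"
  assumes "ergodic P" and "stationary P \<pi>"
  shows "ereal ((1/2 - 1/(2 * exp 1))^2 / (8 * (real (mix_time P \<pi> (1/(2 * exp 1))))^2)) \<le> lambda1 P \<pi>
       \<and> ereal ((1/2 - 1/(2 * exp 1))^2 / (8 * (cmix_time P \<pi> (1/(2 * exp 1)))^2)) \<le> lambda1 P \<pi>"
proof -
  define \<epsilon> :: real where "\<epsilon> = 1/(2 * exp 1)"
  have "0 < \<epsilon>" "\<epsilon> \<le> 1/4" "1/6 \<le> \<epsilon>"
    using exp_ge_add_one_self[of 1] exp_le by (auto simp: \<epsilon>_def field_simps)
  define a where "a = 1/2 - \<epsilon>"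
  have "0 < a" "a \<le> 1/3" using \<open>\<epsilon> \<le> 1/4\<close> \<open>1/6 \<le> \<epsilon>\<close> by (auto simp: a_def)
  define \<tau> \<sigma> where "\<tau> = real (mix_time P \<pi> \<epsilon>)" and "\<sigma> = cmix_time P \<pi> \<epsilon>"
  have "a^2 / (8 * \<tau>^2) \<le> a / (2 * \<tau>^2)"
    using \<open>0 < a\<close> \<open>a \<le> 1/3\<close> by (simp add: divide_simps power2_eq_square)
  also have "ereal (a / (2 * \<tau>^2)) \<le> lambda1 P \<pi>"
    using lambda1_ge_mix_time[OF assms \<open>0 < \<epsilon>\<close>] \<open>\<epsilon> \<le> 1/4\<close> by (simp add: a_def \<tau>_def)
  finally have discrete: "ereal (a^2 / (8 * \<tau>^2)) \<le> lambda1 P \<pi>" by simp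
  have continuous: "ereal (a^2 / (8 * \<sigma>^2)) \<le> lambda1 P \<pi>"
  proof (cases "\<exists>x1 x2 :: 'a. x1 \<noteq> x2")
    case True
    then obtain x1 x2 :: 'a where x12: "x1 \<noteq> x2" by blast
    have "a^2 / (8 * \<sigma>^2) \<le> a / (2 * ((2 * \<sigma>)^2 + 2 * \<sigma>))"
      unfolding \<sigma>_def using cmix_time_ge_quarter[OF assms \<open>0 < \<epsilon>\<close> \<open>\<epsilon> \<le> 1/4\<close> x12]
      by (rule sq_div_le_div_of_quarter_le[OF \<open>0 < a\<close> \<open>a \<le> 1/3\<close>])
    also have "ereal (a / (2 * ((2 * \<sigma>)^2 + 2 * \<sigma>))) \<le> lambda1 P \<pi>"
      unfolding a_def \<sigma>_def by (rule lambda1_ge_cmix_time[OF assms \<open>0 < \<epsilon>\<close> \<open>\<epsilon> \<le> 1/4\<close> x12])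
    finally show ?thesis by simp
  qed (simp add: lambda1_eq_top_if_subsingleton)
  show ?thesis using discrete continuous by (simp add: a_def \<epsilon>_def \<tau>_def \<sigma>_def)
qed

end
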